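(* Let $\alpha\in(-1,1)^N$ with $\alpha\neq0$. The set-valued map $\mathcal{F}^\alpha:\mathcal{C}(I)\rightrightarrows\mathcal{C}(I)$, $\mathcal{F}^\alpha(f)=\{f^\alpha_{\Delta,B_n(f)}:n\in\mathbb{N}\}$, is not convex, and in particular not linear.
   Context: $I=[x_0,x_N]$, $\mathcal{C}(I)$ real continuous functions with sup norm, $\Delta=\{x_0<\dots<x_N\}$, $N\ge2$, $I_i=[x_{i-1},x_i]$, $L_i(x)=a_ix+b_i$ the affine map of $I$ onto $I_i$ with $L_i(x_0)=x_{i-1}$, $L_i(x_N)=x_i$. For $f,b\in\mathcal{C}(I)$ with $b(x_0)=f(x_0)$, $b(x_N)=f(x_N)$, $f^\alpha_{\Delta,b}$ is the unique $g\in\mathcal{C}(I)$ with $g(x)=f(x)+\alpha_i(g-b)(L_i^{-1}(x))$ for $x\in I_i$. $B_n$ is the Bernstein operator $B_nf(x)=\sum_{k=0}^n f\big(x_0+\tfrac kn(x_N-x_0)\big)\binom nk\frac{(x-x_0)^k(x_N-x)^{n-k}}{(x_N-x_0)^n}$. A set-valued map $T:X\rightrightarrows Y$ is convex if $\lambda T(x_1)+(1-\lambda)T(x_2)\subseteq T(\lambda x_1+(1-\lambda)x_2)$ for all $x_1,x_2$ in its domain and $\lambda\in[0,1]$; it is linear if $\beta T(x_1)+\gamma T(x_2)\subseteq T(\beta x_1+\gamma x_2)$ for all $x_1,x_2$ in its domain and $\beta,\gamma\in\mathbb{R}$. *)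

theory Defs
  imports "HOL-Analysis.Analysis"
begin

text \<open>Elements of C(I), I = [a,b], represented as real functions continuous on I
  and equal to 0 outside I (so that equality of functions is equality in C(I)).\<close>
definition CI :: "real \<Rightarrow> real \<Rightarrow> (real \<Rightarrow> real) set" where
  "CI a b = {f. continuous_on {a..b} f \<and> (\<forall>t. t \<notin> {a..b} \<longrightarrow> f t = 0)}"

definition bernstein :: "real \<Rightarrow> real \<Rightarrow> nat \<Rightarrow> (real \<Rightarrow> real) \<Rightarrow> (real \<Rightarrow> real)" where
  "bernstein a b n f = (\<lambda>t. if t \<in> {a..b} then
     (\<Sum>k=0..n. f (a + real k / real n * (b - a)) * real (n choose k)
        * (t - a) ^ k * (b - t) ^ (n - k) / (b - a) ^ n) else 0)"

text \<open>Inverse of the affine map L_i of [x_0,x_N] onto [x_{i-1},x_i]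
  with L_i(x_0)=x_{i-1}, L_i(x_N)=x_i.\<close>
definition Linv :: "(nat \<Rightarrow> real) \<Rightarrow> nat \<Rightarrow> nat \<Rightarrow> real \<Rightarrow> real" where
  "Linv x N i y = x 0 + (y - x (i - 1)) * (x N - x 0) / (x i - x (i - 1))"

definition fif :: "(nat \<Rightarrow> real) \<Rightarrow> nat \<Rightarrow> (nat \<Rightarrow> real) \<Rightarrow> (real \<Rightarrow> real) \<Rightarrow> (real \<Rightarrow> real) \<Rightarrow> (real \<Rightarrow> real)" where
  "fif x N \<alpha> f b = (THE g. g \<in> CI (x 0) (x N) \<and>
     (\<forall>i\<in>{1..N}. \<forall>t\<in>{x (i - 1)..x i}.
        g t = f t + \<alpha> i * (g (Linv x N i t) - b (Linv x N i t))))"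

definition Fmap :: "(nat \<Rightarrow> real) \<Rightarrow> nat \<Rightarrow> (nat \<Rightarrow> real) \<Rightarrow> (real \<Rightarrow> real) \<Rightarrow> (real \<Rightarrow> real) set" where
  "Fmap x N \<alpha> f = {fif x N \<alpha> f (bernstein (x 0) (x N) n f) | n. n \<ge> 1}"

definition convex_svm :: "(real \<Rightarrow> real) set \<Rightarrow> ((real \<Rightarrow> real) \<Rightarrow> (real \<Rightarrow> real) set) \<Rightarrow> bool" where
  "convex_svm D T \<longleftrightarrow> (\<forall>f1\<in>D. \<forall>f2\<in>D. \<forall>l\<in>{0..1::real}.
     {(\<lambda>t. l * g1 t + (1 - l) * g2 t) | g1 g2. g1 \<in> T f1 \<and> g2 \<in> T f2}
       \<subseteq> T (\<lambda>t. l * f1 t + (1 - l) * f2 t))"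

definition linear_svm :: "(real \<Rightarrow> real) set \<Rightarrow> ((real \<Rightarrow> real) \<Rightarrow> (real \<Rightarrow> real) set) \<Rightarrow> bool" where
  "linear_svm D T \<longleftrightarrow> (\<forall>f1\<in>D. \<forall>f2\<in>D. \<forall>\<beta>::real. \<forall>\<gamma>::real.
     {(\<lambda>t. \<beta> * g1 t + \<gamma> * g2 t) | g1 g2. g1 \<in> T f1 \<and> g2 \<in> T f2}
       \<subseteq> T (\<lambda>t. \<beta> * f1 t + \<gamma> * f2 t))"

end

theory Submission
  imports Defs
begin

text \<open>The fractal function \<open>g = f\<^sup>\<alpha>\<^sub>\<Delta>\<^sub>,\<^sub>b\<close> depends affinely on the base \<open>b\<close>, and \<open>b\<close> can be read
  off from \<open>g\<close> on a piece where \<open>\<alpha>\<^sub>i \<noteq> 0\<close>: \<open>\<alpha>\<^sub>i b(s) = \<alpha>\<^sub>i g(s) + f(L\<^sub>i s) - g(L\<^sub>i s)\<close>.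
  Hence a convex combination of two elements of \<open>\<F>\<^sup>\<alpha>(f)\<close> can only lie in
  \<open>\<F>\<^sup>\<alpha>(f)\<close> if the same convex combination of their Bernstein bases is again a Bernstein
  polynomial \<open>B\<^sub>k f\<close>. For \<open>f(t) = (t - x\<^sub>0)\<^sup>2\<close> one has
  \<open>B\<^sub>n f(t) = (t - x\<^sub>0)\<^sup>2 + (t - x\<^sub>0)(x\<^sub>N - t)/n\<close>, and at the midpoint of \<open>I\<close> the average
  of \<open>B\<^sub>1 f\<close> and \<open>B\<^sub>2 f\<close> would force \<open>1/k = 3/4\<close>.\<close>

lemma continuous_on_bernstein:
  assumes "a < c"
  shows "continuous_on {a..c} (bernstein a c n f)"
proof -
  have "continuous_on {a..c} (\<lambda>t. \<Sum>k=0..n. f (a + real k / real n * (c - a)) * real (n choose k)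
      * (t - a) ^ k * (c - t) ^ (n - k) / (c - a) ^ n)"
    using assms by (intro continuous_intros) auto
  then show ?thesis by (rule continuous_on_eq) (simp add: bernstein_def)
qed

lemma bernstein_left_endpoint:
  assumes "a < c"
  shows "bernstein a c n f a = f a"
proof -
  have "f (a + real k / real n * (c - a)) * real (n choose k) * (a - a) ^ k * (c - a) ^ (n - k) / (c - a) ^ n
      = (if k = 0 then f a else 0)" for k
    using assms by simp
  then have "bernstein a c n f a = (\<Sum>k=0..n. if k = 0 then f a else 0)"
    unfolding bernstein_def using assms by simp
  then show ?thesis by simp
qed

lemma bernstein_right_endpoint:
  assumes "a < c" and "n \<ge> 1"
  shows "bernstein a c n f c = f c"
proof -
  have "f (a + real k / real n * (c - a)) * real (n choose k) * (c - a) ^ k * (c - c) ^ (n - k) / (c - a) ^ n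
      = (if k = n then f c else 0)" if "k \<in> {0..n}" for k
    using assms that by auto
  then have "bernstein a c n f c = (\<Sum>k=0..n. if k = n then f c else 0)"
    unfolding bernstein_def using assms by (subst sum.cong[OF refl]) auto
  then show ?thesis by simp
qed

definition shifted_square :: "real \<Rightarrow> real \<Rightarrow> real \<Rightarrow> real" where
  "shifted_square a c t = (if t \<in> {a..c} then (t - a)\<^sup>2 else 0)"

lemma shifted_square_CI: "shifted_square a c \<in> CI a c"
proof -
  have "continuous_on {a..c} (\<lambda>t. (t - a)\<^sup>2)" by (intro continuous_intros)
  then have "continuous_on {a..c} (shifted_square a c)"
    by (rule continuous_on_eq) (simp add: shifted_square_def)
  then show ?thesis unfolding CI_def by (simp add: shifted_square_def)
qed

text \<open>With \<open>p = (t - a)/(c - a)\<close> this is the second moment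
  \<open>\<Sum>\<^sub>k k\<^sup>2 Bernstein n k p = n(n - 1)p\<^sup>2 + np\<close>.\<close>
lemma bernstein_shifted_square:
  assumes ac: "a < c" and n: "n \<ge> 1" and t: "t \<in> {a..c}"
  shows "bernstein a c n (shifted_square a c) t = (t - a)\<^sup>2 + (t - a) * (c - t) / real n"
proof -
  define p where "p = (t - a) / (c - a)"
  have node_term: "shifted_square a c (a + real k / real n * (c - a)) * real (n choose k)
        * (t - a) ^ k * (c - t) ^ (n - k) / (c - a) ^ n
      = (c - a)\<^sup>2 / (real n)\<^sup>2 * (real k * real k * Bernstein n k p)" if k: "k \<le> n" for k
  proof -
    have "real k / real n * (c - a) \<le> 1 * (c - a)"
      using k ac by (intro mult_right_mono) (auto simp: divide_le_eq_1)
    then have node: "a + real k / real n * (c - a) \<in> {a..c}" using ac by auto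
    have power_quotient: "(t - a) ^ k * (c - t) ^ (n - k) / (c - a) ^ n = p ^ k * (1 - p) ^ (n - k)"
    proof -
      have "(c - a) ^ n = (c - a) ^ k * (c - a) ^ (n - k)" using k by (simp flip: power_add)
      then have "(t - a) ^ k * (c - t) ^ (n - k) / (c - a) ^ n
          = ((t - a) / (c - a)) ^ k * ((c - t) / (c - a)) ^ (n - k)"
        by (simp add: power_divide)
      moreover have "(c - t) / (c - a) = 1 - p" unfolding p_def using ac by (simp add: field_simps)
      ultimately show ?thesis unfolding p_def by simp
    qed
    have "shifted_square a c (a + real k / real n * (c - a)) * real (n choose k)
        * (t - a) ^ k * (c - t) ^ (n - k) / (c - a) ^ n
      = (real k / real n * (c - a))\<^sup>2 * real (n choose k) * (p ^ k * (1 - p) ^ (n - k))"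
      using node unfolding shifted_square_def power_quotient[symmetric] by simp
    then show ?thesis unfolding Bernstein_def by (simp add: power2_eq_square field_simps)
  qed
  have "bernstein a c n (shifted_square a c) t
      = (c - a)\<^sup>2 / (real n)\<^sup>2 * (\<Sum>k\<le>n. real k * real k * Bernstein n k p)"
    unfolding bernstein_def atLeast0AtMost sum_distrib_left using t node_term by simp
  also have "(\<Sum>k\<le>n. real k * real k * Bernstein n k p)
      = (\<Sum>k\<le>n. real k * (real k - 1) * Bernstein n k p + real k * Bernstein n k p)"
    by (rule sum.cong) (auto simp: algebra_simps)
  also have "\<dots> = real n * (real n - 1) * p\<^sup>2 + real n * p"
    by (simp add: sum.distrib)
  also have "(c - a)\<^sup>2 / (real n)\<^sup>2 * (real n * (real n - 1) * p\<^sup>2 + real n * p)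
      = (real n - 1) * (t - a)\<^sup>2 / real n + (t - a) * (c - a) / real n"
  proof -
    have "w\<^sup>2 / m\<^sup>2 * (m * (m - 1) * (u / w)\<^sup>2 + m * (u / w)) = (m - 1) * u\<^sup>2 / m + u * w / m"
      if "w \<noteq> 0" "m \<noteq> 0" for w u m :: real
      using that by (simp add: power2_eq_square field_simps)
    then show ?thesis unfolding p_def using ac n by simp
  qed
  also have "\<dots> = (t - a)\<^sup>2 + (t - a) * (c - t) / real n"
    using n by (simp add: power2_eq_square field_simps)
  finally show ?thesis .
qed

lemma bernstein_shifted_square_midpoint:
  assumes "a < c" and n: "n \<ge> 1"
  shows "bernstein a c n (shifted_square a c) ((a + c) / 2) = (c - a)\<^sup>2 / 4 * (1 + 1 / real n)"
proof -
  have "real n > 0" using n by simp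
  then show ?thesis using bernstein_shifted_square[OF assms, of "(a + c) / 2"] assms
    by (simp add: power2_eq_square field_simps)
qed

definition fractal_equation ::
    "(nat \<Rightarrow> real) \<Rightarrow> nat \<Rightarrow> (nat \<Rightarrow> real) \<Rightarrow> (real \<Rightarrow> real) \<Rightarrow> (real \<Rightarrow> real) \<Rightarrow> (real \<Rightarrow> real) \<Rightarrow> bool"
  where "fractal_equation x N \<alpha> f b g \<longleftrightarrow> (\<forall>i\<in>{1..N}. \<forall>t\<in>{x (i - 1)..x i}.
           g t = f t + \<alpha> i * (g (Linv x N i t) - b (Linv x N i t)))"

lemma fif_eq_The: "fif x N \<alpha> f b = (THE g. g \<in> CI (x 0) (x N) \<and> fractal_equation x N \<alpha> f b g)"
  unfolding fif_def fractal_equation_def ..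

definition Lmap :: "(nat \<Rightarrow> real) \<Rightarrow> nat \<Rightarrow> nat \<Rightarrow> real \<Rightarrow> real" where
  "Lmap x N i s = x (i - 1) + (s - x 0) * (x i - x (i - 1)) / (x N - x 0)"

lemma Linv_Lmap:
  assumes "x (i - 1) < x i" and "x 0 < x N"
  shows "Linv x N i (Lmap x N i s) = s"
proof -
  have "Lmap x N i s - x (i - 1) = (s - x 0) * (x i - x (i - 1)) / (x N - x 0)"
    unfolding Lmap_def by simp
  then show ?thesis unfolding Linv_def using assms by simp
qed

lemma Linv_left: "x (i - 1) < x i \<Longrightarrow> Linv x N i (x (i - 1)) = x 0"
  unfolding Linv_def by simp

lemma Linv_right: "x (i - 1) < x i \<Longrightarrow> Linv x N i (x i) = x N"
  unfolding Linv_def by simp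

text \<open>At a common endpoint of two pieces \<open>I\<^sub>i\<close> the left one is chosen.\<close>
definition piece :: "(nat \<Rightarrow> real) \<Rightarrow> real \<Rightarrow> nat" where
  "piece x t = (LEAST i. 1 \<le> i \<and> t \<le> x i)"

locale interval_partition =
  fixes x :: "nat \<Rightarrow> real" and N :: nat
  assumes N_pos: "N \<ge> 1"
    and x_strict: "\<And>i. i < N \<Longrightarrow> x i < x (Suc i)"
begin

lemma x_less: "i < j \<Longrightarrow> j \<le> N \<Longrightarrow> x i < x j"
  by (rule lift_Suc_mono_less_ivl[of "{..<N}"]) (use x_strict in auto)

lemma x_le: "i \<le> j \<Longrightarrow> j \<le> N \<Longrightarrow> x i \<le> x j"
  using x_less[of i j] by (cases "i = j") auto

lemma x_piece_less: "i \<in> {1..N} \<Longrightarrow> x (i - 1) < x i"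
  using x_less[of "i - 1" i] by auto

lemma x_0_less_N: "x 0 < x N"
  using x_less[of 0 N] N_pos by auto

lemma piece_subset: "i \<in> {1..N} \<Longrightarrow> {x (i - 1)..x i} \<subseteq> {x 0..x N}"
  using x_le[of 0 "i - 1"] x_le[of i N] by auto

lemma Linv_mem:
  assumes i: "i \<in> {1..N}" and t: "t \<in> {x (i - 1)..x i}"
  shows "Linv x N i t \<in> {x 0..x N}"
proof -
  define u where "u = (t - x (i - 1)) / (x i - x (i - 1))"
  have u: "0 \<le> u" "u \<le> 1" using x_piece_less[OF i] t by (auto simp: u_def)
  have "0 \<le> u * (x N - x 0)" "u * (x N - x 0) \<le> 1 * (x N - x 0)"
    using u x_0_less_N by (auto intro: mult_right_mono)
  moreover have "Linv x N i t = x 0 + u * (x N - x 0)" unfolding Linv_def u_def by simp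
  ultimately show ?thesis by auto
qed

lemma Lmap_mem:
  assumes i: "i \<in> {1..N}" and s: "s \<in> {x 0..x N}"
  shows "Lmap x N i s \<in> {x (i - 1)..x i}"
proof -
  define u where "u = (s - x 0) / (x N - x 0)"
  have u: "0 \<le> u" "u \<le> 1" using x_0_less_N s by (auto simp: u_def)
  have "0 \<le> u * (x i - x (i - 1))" "u * (x i - x (i - 1)) \<le> 1 * (x i - x (i - 1))"
    using u x_piece_less[OF i] by (auto intro: mult_right_mono)
  moreover have "Lmap x N i s = x (i - 1) + u * (x i - x (i - 1))" unfolding Lmap_def u_def by simp
  ultimately show ?thesis by auto
qed

lemma piece_mem:
  assumes t: "t \<in> {x 0..x N}"
  shows "piece x t \<in> {1..N}" and "t \<in> {x (piece x t - 1)..x (piece x t)}"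
proof -
  let ?P = "\<lambda>i. 1 \<le> i \<and> t \<le> x i"
  have PN: "?P N" using N_pos t by auto
  have P: "?P (piece x t)" unfolding piece_def by (rule LeastI[of ?P N, OF PN])
  have le: "piece x t \<le> N" unfolding piece_def by (rule Least_le[of ?P N, OF PN])
  show "piece x t \<in> {1..N}" using P le by auto
  have "x (piece x t - 1) \<le> t"
  proof (cases "piece x t = 1")
    case True then show ?thesis using t by simp
  next
    case False
    then have "piece x t - 1 < piece x t" "1 \<le> piece x t - 1" using P by auto
    then have "\<not> ?P (piece x t - 1)" unfolding piece_def using not_less_Least by blast
    then show ?thesis using \<open>1 \<le> piece x t - 1\<close> by auto
  qed
  then show "t \<in> {x (piece x t - 1)..x (piece x t)}" using P by auto
qed

lemma interval_eq_Union_pieces: "{x 0..x N} = (\<Union>i\<in>{1..N}. {x (i - 1)..x i})"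
proof
  show "{x 0..x N} \<subseteq> (\<Union>i\<in>{1..N}. {x (i - 1)..x i})"
    using piece_mem by blast
  show "(\<Union>i\<in>{1..N}. {x (i - 1)..x i}) \<subseteq> {x 0..x N}"
    using piece_subset by blast
qed

lemma continuous_on_comp_Linv:
  assumes i: "i \<in> {1..N}" and g: "continuous_on {x 0..x N} g"
  shows "continuous_on {x (i - 1)..x i} (\<lambda>t. g (Linv x N i t))"
proof (rule continuous_on_compose2[OF g])
  show "continuous_on {x (i - 1)..x i} (Linv x N i)"
    unfolding Linv_def by (intro continuous_intros) (use x_piece_less[OF i] in auto)
  show "Linv x N i ` {x (i - 1)..x i} \<subseteq> {x 0..x N}" using Linv_mem[OF i] by auto
qed

end

text \<open>The Read-Bajraktarevi\'c operator, whose fixed point is \<open>f\<^sup>\<alpha>\<^sub>\<Delta>\<^sub>,\<^sub>b\<close>.\<close>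
definition rb_op ::
    "(nat \<Rightarrow> real) \<Rightarrow> nat \<Rightarrow> (nat \<Rightarrow> real) \<Rightarrow> (real \<Rightarrow> real) \<Rightarrow> (real \<Rightarrow> real) \<Rightarrow> (real \<Rightarrow> real) \<Rightarrow> real \<Rightarrow> real"
  where "rb_op x N \<alpha> f b g t = (if t \<in> {x 0..x N} then
     f t + \<alpha> (piece x t) * (g (Linv x N (piece x t) t) - b (Linv x N (piece x t) t)) else 0)"

locale fractal_setting = interval_partition +
  fixes \<alpha> :: "nat \<Rightarrow> real"
  assumes alpha_bound: "\<And>i. i \<in> {1..N} \<Longrightarrow> \<alpha> i \<in> {-1<..<1}"
begin

lemma alpha_uniform_bound: obtains q where "0 \<le> q" "q < 1" "\<forall>i\<in>{1..N}. \<bar>\<alpha> i\<bar> \<le> q"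
proof
  define q where "q = Max ((\<lambda>i. \<bar>\<alpha> i\<bar>) ` {1..N})"
  have "q \<in> (\<lambda>i. \<bar>\<alpha> i\<bar>) ` {1..N}" unfolding q_def by (rule Max_in) (use N_pos in auto)
  then show "q < 1" "0 \<le> q" using alpha_bound by (auto simp: abs_less_iff)
  show "\<forall>i\<in>{1..N}. \<bar>\<alpha> i\<bar> \<le> q" unfolding q_def by (auto intro: Max_ge)
qed

text \<open>At a common endpoint \<open>x\<^sub>i\<close> of two pieces the two defining formulas agree because
  \<open>g\<close> and \<open>b\<close> agree at the endpoints of \<open>I\<close>.\<close>
lemma rb_op_eq:
  assumes i: "i \<in> {1..N}" and t: "t \<in> {x (i - 1)..x i}"
    and g0: "g (x 0) = b (x 0)" and gN: "g (x N) = b (x N)"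
  shows "rb_op x N \<alpha> f b g t = f t + \<alpha> i * (g (Linv x N i t) - b (Linv x N i t))"
proof -
  have tI: "t \<in> {x 0..x N}" using piece_subset[OF i] t by auto
  define j where "j = piece x t"
  have j: "j \<in> {1..N}" "t \<in> {x (j - 1)..x j}" using piece_mem[OF tI] j_def by auto
  have "j \<le> i" unfolding j_def piece_def
    by (rule Least_le[of "\<lambda>i. 1 \<le> i \<and> t \<le> x i"]) (use i t in auto)
  show ?thesis
  proof (cases "j = i")
    case True then show ?thesis unfolding rb_op_def j_def using tI by simp
  next
    case False
    then have "j \<le> i - 1" using \<open>j \<le> i\<close> by auto
    then have "x j \<le> x (i - 1)" using x_le[of j "i - 1"] i by auto
    then have tj: "t = x j" "t = x (i - 1)" using j t by auto
    have "Linv x N j t = x N" using tj Linv_right[of x j N] x_piece_less[OF j(1)] by simp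
    moreover have "Linv x N i t = x 0" using tj Linv_left[of x i N] x_piece_less[OF i] by simp
    ultimately show ?thesis unfolding rb_op_def j_def[symmetric] using tI g0 gN by simp
  qed
qed

lemma rb_op_contraction:
  assumes M: "\<forall>s\<in>{x 0..x N}. \<bar>g1 s - g2 s\<bar> \<le> M" and q: "\<forall>i\<in>{1..N}. \<bar>\<alpha> i\<bar> \<le> q"
    and t: "t \<in> {x 0..x N}"
  shows "\<bar>rb_op x N \<alpha> f b g1 t - rb_op x N \<alpha> f b g2 t\<bar> \<le> q * M"
proof -
  define j where "j = piece x t"
  have j: "j \<in> {1..N}" "t \<in> {x (j - 1)..x j}" using piece_mem[OF t] j_def by auto
  define s where "s = Linv x N j t"
  have s: "s \<in> {x 0..x N}" unfolding s_def by (rule Linv_mem[OF j])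
  have "rb_op x N \<alpha> f b g1 t - rb_op x N \<alpha> f b g2 t = \<alpha> j * (g1 s - g2 s)"
    unfolding rb_op_def j_def[symmetric] s_def using t by (simp add: algebra_simps)
  then have "\<bar>rb_op x N \<alpha> f b g1 t - rb_op x N \<alpha> f b g2 t\<bar> = \<bar>\<alpha> j\<bar> * \<bar>g1 s - g2 s\<bar>"
    by (simp add: abs_mult)
  also have "\<dots> \<le> q * M"
    using M s q j(1) by (intro mult_mono) auto
  finally show ?thesis .
qed

lemma rb_op_continuous:
  assumes f: "continuous_on {x 0..x N} f" and b: "continuous_on {x 0..x N} b"
    and g: "continuous_on {x 0..x N} g"
    and g0: "g (x 0) = b (x 0)" and gN: "g (x N) = b (x N)"
  shows "continuous_on {x 0..x N} (rb_op x N \<alpha> f b g)"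
  unfolding interval_eq_Union_pieces
proof (rule continuous_on_closed_Union)
  fix i assume i: "i \<in> {1..N}"
  have "continuous_on {x (i - 1)..x i} (\<lambda>t. f t + \<alpha> i * (g (Linv x N i t) - b (Linv x N i t)))"
    using continuous_on_comp_Linv[OF i g] continuous_on_comp_Linv[OF i b]
      continuous_on_subset[OF f piece_subset[OF i]]
    by (intro continuous_intros) auto
  then show "continuous_on {x (i - 1)..x i} (rb_op x N \<alpha> f b g)"
    by (rule continuous_on_cong[THEN iffD1, rotated -1]) (use rb_op_eq[OF i _ g0 gN] in auto)
qed auto

lemma rb_op_endpoints:
  assumes g0: "g (x 0) = b (x 0)" and gN: "g (x N) = b (x N)"
  shows "rb_op x N \<alpha> f b g (x 0) = f (x 0)" and "rb_op x N \<alpha> f b g (x N) = f (x N)"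
proof -
  have first: "1 \<in> {1..N}" and last: "N \<in> {1..N}" using N_pos by auto
  show "rb_op x N \<alpha> f b g (x 0) = f (x 0)"
    using rb_op_eq[OF first _ g0 gN, of "x 0"] Linv_left[of x 1 N] x_piece_less[OF first] g0 by simp
  show "rb_op x N \<alpha> f b g (x N) = f (x N)"
    using rb_op_eq[OF last _ g0 gN, of "x N"] Linv_right[of x N N] x_piece_less[OF last] gN by simp
qed

lemma rb_op_iterate_continuous_endpoints:
  assumes f: "continuous_on {x 0..x N} f" and b: "continuous_on {x 0..x N} b"
    and bf0: "b (x 0) = f (x 0)" and bfN: "b (x N) = f (x N)"
  shows "continuous_on {x 0..x N} ((rb_op x N \<alpha> f b ^^ k) f)
    \<and> (rb_op x N \<alpha> f b ^^ k) f (x 0) = f (x 0) \<and> (rb_op x N \<alpha> f b ^^ k) f (x N) = f (x N)"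
proof (induction k)
  case 0 then show ?case using f by simp
next
  case (Suc k)
  let ?g = "(rb_op x N \<alpha> f b ^^ k) f"
  have g0: "?g (x 0) = b (x 0)" and gN: "?g (x N) = b (x N)" using Suc bf0 bfN by auto
  have "continuous_on {x 0..x N} (rb_op x N \<alpha> f b ?g)"
    using rb_op_continuous[OF f b _ g0 gN] Suc by blast
  then show ?case using rb_op_endpoints[OF g0 gN] by simp
qed

lemma rb_op_iterate_step_bound:
  assumes f: "continuous_on {x 0..x N} f" and b: "continuous_on {x 0..x N} b"
    and bf0: "b (x 0) = f (x 0)" and bfN: "b (x N) = f (x N)"
    and q: "\<forall>i\<in>{1..N}. \<bar>\<alpha> i\<bar> \<le> q"
  shows "\<exists>M. \<forall>k. \<forall>t\<in>{x 0..x N}.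
    \<bar>(rb_op x N \<alpha> f b ^^ Suc k) f t - (rb_op x N \<alpha> f b ^^ k) f t\<bar> \<le> q ^ k * M"
proof -
  let ?G = "\<lambda>k. (rb_op x N \<alpha> f b ^^ k) f"
  note G = rb_op_iterate_continuous_endpoints[OF f b bf0 bfN]
  have "bounded ((\<lambda>t. ?G 1 t - ?G 0 t) ` {x 0..x N})"
    by (intro compact_imp_bounded compact_continuous_image) (use G[of 0] G[of 1] in \<open>auto intro!: continuous_intros\<close>)
  then obtain M where M: "\<forall>t\<in>{x 0..x N}. \<bar>?G 1 t - ?G 0 t\<bar> \<le> M"
    unfolding bounded_iff by auto
  have bound: "\<forall>t\<in>{x 0..x N}. \<bar>?G (Suc k) t - ?G k t\<bar> \<le> q ^ k * M" for k
  proof (induction k)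
    case 0 then show ?case using M by simp
  next
    case (Suc k)
    then show ?case using rb_op_contraction[OF Suc q] by (simp add: algebra_simps)
  qed
  then show ?thesis by blast
qed

lemma rb_op_iterates_converge:
  assumes f: "continuous_on {x 0..x N} f" and b: "continuous_on {x 0..x N} b"
    and bf0: "b (x 0) = f (x 0)" and bfN: "b (x N) = f (x N)"
  obtains h where "continuous_on {x 0..x N} h"
    and "\<And>t. t \<in> {x 0..x N} \<Longrightarrow> (\<lambda>n. (rb_op x N \<alpha> f b ^^ n) f t) \<longlonglongrightarrow> h t"
proof -
  let ?I = "{x 0..x N}"
  let ?G = "\<lambda>k. (rb_op x N \<alpha> f b ^^ k) f"
  note G = rb_op_iterate_continuous_endpoints[OF f b bf0 bfN]
  obtain q where q: "0 \<le> q" "q < 1" "\<forall>i\<in>{1..N}. \<bar>\<alpha> i\<bar> \<le> q" using alpha_uniform_bound .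
  obtain M where M: "\<And>k t. t \<in> ?I \<Longrightarrow> \<bar>?G (Suc k) t - ?G k t\<bar> \<le> q ^ k * M"
    using rb_op_iterate_step_bound[OF f b bf0 bfN q(3)] by blast
  define d where "d t = (\<Sum>k. ?G (Suc k) t - ?G k t)" for t
  have "uniform_limit ?I (\<lambda>n t. \<Sum>k<n. ?G (Suc k) t - ?G k t) d sequentially"
    unfolding d_def by (rule Weierstrass_m_test[of _ _ "\<lambda>k. q ^ k * M"])
      (use M q in \<open>auto intro!: summable_mult2 simp: summable_geometric\<close>)
  moreover have "(\<lambda>n t. \<Sum>k<n. ?G (Suc k) t - ?G k t) = (\<lambda>n t. ?G n t - ?G 0 t)"
    by (intro ext) (rule sum_lessThan_telescope)
  ultimately have ul: "uniform_limit ?I (\<lambda>n t. ?G n t - ?G 0 t) d sequentially"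
    by simp
  show ?thesis
  proof
    show "continuous_on ?I (\<lambda>t. f t + d t)"
      by (intro continuous_intros f uniform_limit_theorem[OF _ ul])
        (use G f in \<open>auto intro!: always_eventually continuous_intros\<close>)
    fix t assume t: "t \<in> ?I"
    have "(\<lambda>n. (?G n t - ?G 0 t) + ?G 0 t) \<longlonglongrightarrow> d t + ?G 0 t"
      by (intro tendsto_intros tendsto_uniform_limitI[OF ul t])
    then show "(\<lambda>n. ?G n t) \<longlonglongrightarrow> f t + d t" by (simp add: add.commute)
  qed
qed

lemma fractal_equation_solvable:
  assumes f: "continuous_on {x 0..x N} f" and b: "continuous_on {x 0..x N} b"
    and bf0: "b (x 0) = f (x 0)" and bfN: "b (x N) = f (x N)"
  shows "\<exists>g. g \<in> CI (x 0) (x N) \<and> fractal_equation x N \<alpha> f b g"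
proof -
  let ?I = "{x 0..x N}"
  let ?G = "\<lambda>k. (rb_op x N \<alpha> f b ^^ k) f"
  obtain h where h: "continuous_on ?I h"
    and lim: "\<And>t. t \<in> ?I \<Longrightarrow> (\<lambda>n. ?G n t) \<longlonglongrightarrow> h t"
    using rb_op_iterates_converge[OF f b bf0 bfN] by blast
  define g where "g t = (if t \<in> ?I then h t else 0)" for t
  have "continuous_on ?I g"
    using h by (rule continuous_on_eq) (simp add: g_def)
  then have "g \<in> CI (x 0) (x N)" unfolding CI_def by (simp add: g_def)
  moreover have "g t = f t + \<alpha> i * (g (Linv x N i t) - b (Linv x N i t))"
    if i: "i \<in> {1..N}" and t: "t \<in> {x (i - 1)..x i}" for i t
  proof -
    have tI: "t \<in> ?I" using piece_subset[OF i] t by auto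
    have LI: "Linv x N i t \<in> ?I" by (rule Linv_mem[OF i t])
    have "?G k (x 0) = b (x 0)" "?G k (x N) = b (x N)" for k
      using rb_op_iterate_continuous_endpoints[OF f b bf0 bfN, of k] bf0 bfN by auto
    then have "?G (Suc k) t = f t + \<alpha> i * (?G k (Linv x N i t) - b (Linv x N i t))" for k
      using rb_op_eq[OF i t] by simp
    then have "(\<lambda>k. ?G (Suc k) t) \<longlonglongrightarrow> f t + \<alpha> i * (h (Linv x N i t) - b (Linv x N i t))"
      by (simp only:) (intro tendsto_intros lim[OF LI])
    moreover have "(\<lambda>k. ?G (Suc k) t) \<longlonglongrightarrow> h t" using lim[OF tI] by (rule LIMSEQ_Suc)
    ultimately have "h t = f t + \<alpha> i * (h (Linv x N i t) - b (Linv x N i t))"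
      using LIMSEQ_unique by blast
    then show ?thesis using tI LI by (simp add: g_def)
  qed
  ultimately show ?thesis unfolding fractal_equation_def by blast
qed

text \<open>At a point where \<open>\<bar>g1 - g2\<bar>\<close> is maximal the equation gives
  \<open>\<bar>g1 - g2\<bar> \<le> q \<bar>g1 - g2\<bar>\<close> there.\<close>
lemma fractal_equation_unique:
  assumes g1: "g1 \<in> CI (x 0) (x N)" and g2: "g2 \<in> CI (x 0) (x N)"
    and e1: "fractal_equation x N \<alpha> f b g1" and e2: "fractal_equation x N \<alpha> f b g2"
  shows "g1 = g2"
proof -
  obtain q where q: "0 \<le> q" "q < 1" "\<forall>i\<in>{1..N}. \<bar>\<alpha> i\<bar> \<le> q" using alpha_uniform_bound .
  let ?I = "{x 0..x N}"
  have c: "continuous_on ?I (\<lambda>t. \<bar>g1 t - g2 t\<bar>)" using g1 g2 unfolding CI_def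
    by (auto intro!: continuous_intros)
  have "\<exists>s\<in>?I. \<forall>y\<in>?I. \<bar>g1 y - g2 y\<bar> \<le> \<bar>g1 s - g2 s\<bar>"
    using continuous_attains_sup[OF compact_Icc _ c] x_0_less_N by auto
  then obtain s where s: "s \<in> ?I" "\<forall>y\<in>?I. \<bar>g1 y - g2 y\<bar> \<le> \<bar>g1 s - g2 s\<bar>"
    by blast
  define j where "j = piece x s"
  have j: "j \<in> {1..N}" "s \<in> {x (j - 1)..x j}" using piece_mem[OF s(1)] j_def by auto
  define L where "L = Linv x N j s"
  have L: "L \<in> ?I" unfolding L_def by (rule Linv_mem[OF j])
  have "g1 s = f s + \<alpha> j * (g1 L - b L)" "g2 s = f s + \<alpha> j * (g2 L - b L)"
    using e1 e2 j unfolding fractal_equation_def L_def by blast+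
  then have "g1 s - g2 s = \<alpha> j * (g1 L - g2 L)" by (simp add: algebra_simps)
  then have "\<bar>g1 s - g2 s\<bar> = \<bar>\<alpha> j\<bar> * \<bar>g1 L - g2 L\<bar>" by (simp add: abs_mult)
  also have "\<dots> \<le> q * \<bar>g1 s - g2 s\<bar>" using q j s L by (intro mult_mono) auto
  finally have "\<bar>g1 s - g2 s\<bar> \<le> 0" using q by (simp add: mult_le_cancel_right1)
  then have "\<forall>y\<in>?I. g1 y = g2 y" using s by fastforce
  moreover have "\<forall>y. y \<notin> ?I \<longrightarrow> g1 y = g2 y" using g1 g2 unfolding CI_def by auto
  ultimately show ?thesis by blast
qed

lemma fif_fractal_equation:
  assumes f: "continuous_on {x 0..x N} f" and b: "continuous_on {x 0..x N} b"
    and bf0: "b (x 0) = f (x 0)" and bfN: "b (x N) = f (x N)"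
  shows "fractal_equation x N \<alpha> f b (fif x N \<alpha> f b)"
proof -
  have "\<exists>!g. g \<in> CI (x 0) (x N) \<and> fractal_equation x N \<alpha> f b g"
    using fractal_equation_solvable[OF f b bf0 bfN] fractal_equation_unique by blast
  then have "fif x N \<alpha> f b \<in> CI (x 0) (x N) \<and> fractal_equation x N \<alpha> f b (fif x N \<alpha> f b)"
    unfolding fif_eq_The by (rule theI')
  then show ?thesis ..
qed

lemma fractal_equation_base:
  assumes g: "fractal_equation x N \<alpha> f b g" and i: "i \<in> {1..N}" and s: "s \<in> {x 0..x N}"
  shows "\<alpha> i * b s = \<alpha> i * g s + f (Lmap x N i s) - g (Lmap x N i s)"
proof -
  have "g (Lmap x N i s) = f (Lmap x N i s)
      + \<alpha> i * (g (Linv x N i (Lmap x N i s)) - b (Linv x N i (Lmap x N i s)))"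
    using g Lmap_mem[OF i s] i unfolding fractal_equation_def by blast
  then have "g (Lmap x N i s) = f (Lmap x N i s) + \<alpha> i * (g s - b s)"
    using Linv_Lmap[OF x_piece_less[OF i] x_0_less_N] by simp
  then show ?thesis by (simp add: algebra_simps)
qed

lemma fractal_equation_base_combination:
  assumes g1: "fractal_equation x N \<alpha> f b1 g1" and g2: "fractal_equation x N \<alpha> f b2 g2"
    and g3: "fractal_equation x N \<alpha> f b3 (\<lambda>t. l * g1 t + (1 - l) * g2 t)"
    and i: "i \<in> {1..N}" "\<alpha> i \<noteq> 0" and s: "s \<in> {x 0..x N}"
  shows "b3 s = l * b1 s + (1 - l) * b2 s"
proof -
  have "\<alpha> i * b3 s = l * (\<alpha> i * b1 s) + (1 - l) * (\<alpha> i * b2 s)"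
    unfolding fractal_equation_base[OF g1 i(1) s] fractal_equation_base[OF g2 i(1) s]
      fractal_equation_base[OF g3 i(1) s] by (simp add: algebra_simps)
  then have "\<alpha> i * (b3 s - (l * b1 s + (1 - l) * b2 s)) = 0" by (simp add: algebra_simps)
  then show ?thesis using i(2) by simp
qed

lemma fractal_equation_fif_bernstein:
  assumes f: "f \<in> CI (x 0) (x N)" and n: "n \<ge> 1"
  shows "fractal_equation x N \<alpha> f (bernstein (x 0) (x N) n f) (fif x N \<alpha> f (bernstein (x 0) (x N) n f))"
  using f x_0_less_N n unfolding CI_def
  by (intro fif_fractal_equation continuous_on_bernstein bernstein_left_endpoint bernstein_right_endpoint) auto

lemma Fmap_not_convex:
  assumes i: "i \<in> {1..N}" "\<alpha> i \<noteq> 0"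
  shows "\<not> convex_svm (CI (x 0) (x N)) (Fmap x N \<alpha>)"
proof
  assume convex: "convex_svm (CI (x 0) (x N)) (Fmap x N \<alpha>)"
  define f where "f = shifted_square (x 0) (x N)"
  let ?B = "\<lambda>n. bernstein (x 0) (x N) n f"
  let ?F = "\<lambda>n. fif x N \<alpha> f (?B n)"
  have f: "f \<in> CI (x 0) (x N)" unfolding f_def by (rule shifted_square_CI)
  have "?F 1 \<in> Fmap x N \<alpha> f" "?F 2 \<in> Fmap x N \<alpha> f" unfolding Fmap_def by force+
  moreover have "(1/2::real) \<in> {0..1}" by simp
  ultimately have "(\<lambda>t. 1/2 * ?F 1 t + (1 - 1/2) * ?F 2 t) \<in> Fmap x N \<alpha> (\<lambda>t. 1/2 * f t + (1 - 1/2) * f t)"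
    using convex f unfolding convex_svm_def by blast
  then obtain k where k: "k \<ge> 1" and Fk: "?F k = (\<lambda>t. 1/2 * ?F 1 t + (1 - 1/2) * ?F 2 t)"
    unfolding Fmap_def by auto
  define m where "m = (x 0 + x N) / 2"
  have m: "m \<in> {x 0..x N}" using x_0_less_N unfolding m_def by auto
  have Bm: "?B n m = (x N - x 0)\<^sup>2 / 4 * (1 + 1 / real n)" if "n \<ge> 1" for n
    unfolding f_def m_def using bernstein_shifted_square_midpoint[OF x_0_less_N that] .
  have eq1: "fractal_equation x N \<alpha> f (?B 1) (?F 1)" and eq2: "fractal_equation x N \<alpha> f (?B 2) (?F 2)"
    using fractal_equation_fif_bernstein[OF f] by simp_all
  have "fractal_equation x N \<alpha> f (?B k) (\<lambda>t. 1/2 * ?F 1 t + (1 - 1/2) * ?F 2 t)"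
    using fractal_equation_fif_bernstein[OF f k] unfolding Fk .
  then have "?B k m = 1/2 * ?B 1 m + (1 - 1/2) * ?B 2 m"
    by (rule fractal_equation_base_combination[OF eq1 eq2 _ i m])
  then have "(x N - x 0)\<^sup>2 * (1 + 1 / real k) = (x N - x 0)\<^sup>2 * (7 / 4)"
    using Bm k by simp
  then have "3 * real k = 4" using x_0_less_N k by (simp add: field_simps)
  then have "3 * k = 4" by linarith
  then show False by presburger
qed

end

lemma linear_svm_imp_convex_svm: "linear_svm D T \<Longrightarrow> convex_svm D T"
  unfolding linear_svm_def convex_svm_def by blast

theorem mainTheorem14:
  fixes x :: "nat \<Rightarrow> real" and N :: nat and \<alpha> :: "nat \<Rightarrow> real"
  assumes "N \<ge> 2"
    and "\<And>i. i < N \<Longrightarrow> x i < x (Suc i)"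
    and "\<And>i. i \<in> {1..N} \<Longrightarrow> \<alpha> i \<in> {-1<..<1}"
    and "\<exists>i\<in>{1..N}. \<alpha> i \<noteq> 0"
  shows "\<not> convex_svm (CI (x 0) (x N)) (Fmap x N \<alpha>)
       \<and> \<not> linear_svm (CI (x 0) (x N)) (Fmap x N \<alpha>)"
proof -
  interpret fractal_setting x N \<alpha> using assms(1-3) by unfold_locales auto
  have "\<not> convex_svm (CI (x 0) (x N)) (Fmap x N \<alpha>)" using Fmap_not_convex assms(4) by blast
  then show ?thesis using linear_svm_imp_convex_svm by blast
qed

end
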